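(* Let $\mathcal{G}$ be an anonymous polymatrix game, fix an initial joint action $a_0$, a step-size sequence $(\alpha_k)_{k\ge1}$ in $(0,1]$ with $\sum_k\alpha_k=\infty$, $\sum_k\alpha_k^2<\infty$, and a deterministic tie-breaking rule for $\arg\max$. Run fictitious play (FP) and aggregate fictitious play (agg-FP), both from $a_0$ with these step sizes and tie-breaking rule. Then agg-FP converges, i.e. $\lim_{k\to\infty}\inf_{\pi_*\in\mathbb{NE}(\mathcal{G})}\|\hat\gamma_k-\pi_*\|=0$, if and only if FP converges, i.e. $\lim_{k\to\infty}\inf_{\pi_*\in\mathbb{NE}(\mathcal{G})}\|\hat\pi_k-\pi_*\|=0$.
   Context: Polymatrix: $r^i(a^i,a^{-i})=\sum_{j\ne i}r^{ij}(a^i,a^j)$. Anonymous: common action set $\mathbb{A}$ ($|\mathbb{A}|=n$), each $r^i(a^i,a^{-i})$ invariant under permutations of $a^{-i}$; then $r^i(a^i,a^{-i})=\bar r^i(a^i,\sigma(a^{-i}))$ with $\sigma(a^{-i})=\sum_{j\ne i}\mathds{1}\{a^j\}\in\mathbb{X}=\{\xi\in\mathbb{N}^n:\sum_l\xi_l=N-1\}$. $R^i(a^i,\pi^{-i})=\sum_{a^{-i}}r^i(a^i,a^{-i})\prod_{j\ne i}\pi^j(a^j)$, $\bar R^i(a^i,\mu)=\sum_{x}\bar r^i(a^i,x)\mu(x)$. FP: $\hat\pi^j_0=\mathds{1}\{a^j_0\}$, and for $k\ge1$, $\hat\pi^j_k=\hat\pi^j_{k-1}+\alpha_k(\mathds{1}\{a^j_k\}-\hat\pi^j_{k-1})$,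 with actions $a^i_{k+1}\in\arg\max_{a^i}R^i(a^i,\hat\pi^{-i}_k)$ (for $k\ge0$). agg-FP: $\hat\mu^i_0=\mathds{1}\{\sigma(a^{-i}_0)\}$, for $k\ge1$ $\hat\mu^i_k=\hat\mu^i_{k-1}+\alpha_k(\mathds{1}\{\sigma(a^{-i}_k)\}-\hat\mu^i_{k-1})$, actions $a^i_{k+1}\in\arg\max_{a^i}\bar R^i(a^i,\hat\mu^i_k)$, and empirical action frequencies $\hat\gamma^i_0=\mathds{1}\{a^i_0\}$, $\hat\gamma^i_k=\hat\gamma^i_{k-1}+\alpha_k(\mathds{1}\{a^i_k\}-\hat\gamma^i_{k-1})$. $\mathbb{NE}(\mathcal{G})$ is the set of mixed Nash equilibria: profiles $\pi_*$ with $R^i(\pi^i_*,\pi^{-i}_* )\ge R^i(\pi^i,\pi^{-i}_* )$ for all $i$ and $\pi^i\in\Delta(\mathbb{A})$. *)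

theory Defs
  imports "HOL-Analysis.Analysis"
begin

text \<open>Players: a finite type 'i (N = CARD('i)); common action set: a finite type 'a (n = CARD('a)).
  Mixed strategies are functions 'a => real; mixed profiles are 'i => 'a => real.\<close>

definition polymatrix :: "('i::finite \<Rightarrow> ('i \<Rightarrow> 'a::finite) \<Rightarrow> real) \<Rightarrow> bool" where
  "polymatrix r \<longleftrightarrow> (\<exists>rr :: 'i \<Rightarrow> 'i \<Rightarrow> 'a \<Rightarrow> 'a \<Rightarrow> real.
      \<forall>i a. r i a = (\<Sum>j\<in>UNIV - {i}. rr i j (a i) (a j)))"

definition anonymous :: "('i::finite \<Rightarrow> ('i \<Rightarrow> 'a::finite) \<Rightarrow> real) \<Rightarrow> bool" where
  "anonymous r \<longleftrightarrow> (\<forall>i a p. p permutes (UNIV - {i}) \<longrightarrow> r i (a \<circ> p) = r i a)"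

definition agg :: "'i::finite \<Rightarrow> ('i \<Rightarrow> 'a::finite) \<Rightarrow> ('a \<Rightarrow> nat)" where
  "agg i a = (\<lambda>x. card {j. j \<noteq> i \<and> a j = x})"

definition aggset :: "('i::finite) itself \<Rightarrow> ('a::finite \<Rightarrow> nat) set" where
  "aggset _ = {\<xi>. (\<Sum>l\<in>UNIV. \<xi> l) = CARD('i) - 1}"

text \<open>Aggregate reward rbar i ai xi = r i a for any a with a i = ai and agg i a = xi
  (well defined for anonymous games).\<close>
definition rbar :: "('i::finite \<Rightarrow> ('i \<Rightarrow> 'a::finite) \<Rightarrow> real) \<Rightarrow> 'i \<Rightarrow> 'a \<Rightarrow> ('a \<Rightarrow> nat) \<Rightarrow> real" where
  "rbar r i ai \<xi> = r i (SOME a. a i = ai \<and> agg i a = \<xi>)"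

definition Rpure :: "('i::finite \<Rightarrow> ('i \<Rightarrow> 'a::finite) \<Rightarrow> real) \<Rightarrow> 'i \<Rightarrow> 'a \<Rightarrow> ('i \<Rightarrow> 'a \<Rightarrow> real) \<Rightarrow> real" where
  "Rpure r i ai \<pi> = (\<Sum>b\<in>{b. b i = ai}. r i b * (\<Prod>j\<in>UNIV - {i}. \<pi> j (b j)))"

definition Rmixed :: "('i::finite \<Rightarrow> ('i \<Rightarrow> 'a::finite) \<Rightarrow> real) \<Rightarrow> 'i \<Rightarrow> ('a \<Rightarrow> real) \<Rightarrow> ('i \<Rightarrow> 'a \<Rightarrow> real) \<Rightarrow> real" where
  "Rmixed r i \<rho> \<pi> = (\<Sum>ai\<in>UNIV. \<rho> ai * Rpure r i ai \<pi>)"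

definition Rbar :: "('i::finite \<Rightarrow> ('i \<Rightarrow> 'a::finite) \<Rightarrow> real) \<Rightarrow> 'i \<Rightarrow> 'a \<Rightarrow> (('a \<Rightarrow> nat) \<Rightarrow> real) \<Rightarrow> real" where
  "Rbar r i ai \<mu> = (\<Sum>\<xi>\<in>aggset TYPE('i). rbar r i ai \<xi> * \<mu> \<xi>)"

definition mixed_strats :: "('a::finite \<Rightarrow> real) set" where
  "mixed_strats = {\<rho>. (\<forall>x. 0 \<le> \<rho> x) \<and> (\<Sum>x\<in>UNIV. \<rho> x) = 1}"

definition NE :: "('i::finite \<Rightarrow> ('i \<Rightarrow> 'a::finite) \<Rightarrow> real) \<Rightarrow> ('i \<Rightarrow> 'a \<Rightarrow> real) set" where
  "NE r = {\<pi>. (\<forall>i. \<pi> i \<in> mixed_strats) \<and>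
              (\<forall>i. \<forall>\<rho>\<in>mixed_strats. Rmixed r i (\<pi> i) \<pi> \<ge> Rmixed r i \<rho> \<pi>)}"

definition argmaxset :: "('a::finite \<Rightarrow> real) \<Rightarrow> 'a set" where
  "argmaxset f = {x. \<forall>y. f y \<le> f x}"

definition tie_break :: "('i \<Rightarrow> 'a set \<Rightarrow> 'a) \<Rightarrow> bool" where
  "tie_break tb \<longleftrightarrow> (\<forall>i S. S \<noteq> {} \<longrightarrow> tb i S \<in> S)"

definition ind :: "bool \<Rightarrow> real" where "ind b = (if b then 1 else 0)"

text \<open>FP: state at step k is (a_k, pihat_k).\<close>
fun fp :: "('i::finite \<Rightarrow> ('i \<Rightarrow> 'a::finite) \<Rightarrow> real) \<Rightarrow> ('i \<Rightarrow> 'a set \<Rightarrow> 'a) \<Rightarrow> (nat \<Rightarrow> real)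
            \<Rightarrow> ('i \<Rightarrow> 'a) \<Rightarrow> nat \<Rightarrow> ('i \<Rightarrow> 'a) \<times> ('i \<Rightarrow> 'a \<Rightarrow> real)" where
  "fp r tb \<alpha> a0 0 = (a0, \<lambda>j x. ind (a0 j = x))"
| "fp r tb \<alpha> a0 (Suc k) =
     (let (a, \<pi>) = fp r tb \<alpha> a0 k;
          a' = (\<lambda>i. tb i (argmaxset (\<lambda>ai. Rpure r i ai \<pi>)))
      in (a', \<lambda>j x. \<pi> j x + \<alpha> (Suc k) * (ind (a' j = x) - \<pi> j x)))"

text \<open>agg-FP: state at step k is (a_k, muhat_k, gammahat_k).\<close>
fun aggfp :: "('i::finite \<Rightarrow> ('i \<Rightarrow> 'a::finite) \<Rightarrow> real) \<Rightarrow> ('i \<Rightarrow> 'a set \<Rightarrow> 'a) \<Rightarrow> (nat \<Rightarrow> real)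
            \<Rightarrow> ('i \<Rightarrow> 'a) \<Rightarrow> nat
            \<Rightarrow> ('i \<Rightarrow> 'a) \<times> ('i \<Rightarrow> ('a \<Rightarrow> nat) \<Rightarrow> real) \<times> ('i \<Rightarrow> 'a \<Rightarrow> real)" where
  "aggfp r tb \<alpha> a0 0 = (a0, \<lambda>i \<xi>. ind (agg i a0 = \<xi>), \<lambda>i x. ind (a0 i = x))"
| "aggfp r tb \<alpha> a0 (Suc k) =
     (let (a, \<mu>, \<gamma>) = aggfp r tb \<alpha> a0 k;
          a' = (\<lambda>i. tb i (argmaxset (\<lambda>ai. Rbar r i ai (\<mu> i))))
      in (a', \<lambda>i \<xi>. \<mu> i \<xi> + \<alpha> (Suc k) * (ind (agg i a' = \<xi>) - \<mu> i \<xi>),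
              \<lambda>i x. \<gamma> i x + \<alpha> (Suc k) * (ind (a' i = x) - \<gamma> i x)))"

definition fp_pi where "fp_pi r tb \<alpha> a0 k = snd (fp r tb \<alpha> a0 k)"
definition aggfp_gamma where "aggfp_gamma r tb \<alpha> a0 k = snd (snd (aggfp r tb \<alpha> a0 k))"

definition pdist :: "('i::finite \<Rightarrow> 'a::finite \<Rightarrow> real) \<Rightarrow> ('i \<Rightarrow> 'a \<Rightarrow> real) \<Rightarrow> real" where
  "pdist p q = sqrt (\<Sum>i\<in>UNIV. \<Sum>x\<in>UNIV. (p i x - q i x)\<^sup>2)"

end

theory Submission
  imports Defs
begin

text \<open>In an anonymous polymatrix game, swapping the actions of two opponents of player i shows
  that the pairwise rewards r^{ij}(a^i, -) differ across opponents j only by constants, so r^i is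
  an affine function of the aggregate sigma(a^{-i}). Consequently the expected aggregate reward
  against an empirical aggregate distribution and the expected reward against the product of the
  empirical beliefs both equal the linear form sum_{j ~= i} sum_x r^{ij}(a^i, x) pi^j(x): each side
  is affine in its belief and they agree on point masses. By induction FP and agg-FP then choose
  the same actions at every step, so gamma_k = pi_k for all k and the two convergence statements
  coincide.\<close>

lemma sum_by_value_count:
  fixes f :: "'a::finite \<Rightarrow> real"
  assumes "finite A"
  shows "(\<Sum>l\<in>A. f (a l)) = (\<Sum>x\<in>UNIV. real (card {l\<in>A. a l = x}) * f x)"
proof -
  have "(\<Sum>l\<in>A. f (a l)) = (\<Sum>x\<in>UNIV. \<Sum>l\<in>{l\<in>A. a l = x}. f (a l))"
    using assms by (rule sum.group[symmetric]) auto
  also have "\<dots> = (\<Sum>x\<in>UNIV. real (card {l\<in>A. a l = x}) * f x)"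
    by (intro sum.cong refl) auto
  finally show ?thesis .
qed

lemma sum_prod_marginal:
  fixes \<pi> :: "'i::finite \<Rightarrow> 'a::finite \<Rightarrow> real"
  assumes "j \<noteq> i" and sum_one: "\<And>l. (\<Sum>x\<in>UNIV. \<pi> l x) = 1"
  shows "(\<Sum>b\<in>{b. b i = ai}. h (b j) * (\<Prod>l\<in>UNIV - {i}. \<pi> l (b l))) = (\<Sum>x\<in>UNIV. h x * \<pi> j x)"
proof -
  define f where "f l x = (if l = i then ind (x = ai) else if l = j then h x * \<pi> j x else \<pi> l x)"
    for l x
  have term_eq: "(\<Prod>l\<in>UNIV. f l (b l)) = (if b i = ai then h (b j) * (\<Prod>l\<in>UNIV - {i}. \<pi> l (b l)) else 0)"
    for b :: "'i \<Rightarrow> 'a"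
  proof -
    have "(\<Prod>l\<in>UNIV. f l (b l)) = f i (b i) * f j (b j) * (\<Prod>l\<in>UNIV - {i} - {j}. \<pi> l (b l))"
      using \<open>j \<noteq> i\<close> by (simp add: prod.remove[of _ i] prod.remove[of _ j] f_def)
    moreover have "(\<Prod>l\<in>UNIV - {i}. \<pi> l (b l)) = \<pi> j (b j) * (\<Prod>l\<in>UNIV - {i} - {j}. \<pi> l (b l))"
      using \<open>j \<noteq> i\<close> by (subst prod.remove[of _ j]) auto
    ultimately show ?thesis
      using \<open>j \<noteq> i\<close> by (simp add: f_def ind_def)
  qed
  have factor_sum: "(\<Sum>x\<in>UNIV. f l x) = (if l = j then (\<Sum>x\<in>UNIV. h x * \<pi> j x) else 1)" for l
    using \<open>j \<noteq> i\<close> sum_one by (cases "l = i") (auto simp: f_def ind_def)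
  have "(\<Sum>b\<in>{b. b i = ai}. h (b j) * (\<Prod>l\<in>UNIV - {i}. \<pi> l (b l)))
      = (\<Sum>b\<in>UNIV. \<Prod>l\<in>UNIV. f l (b l))"
    by (simp add: term_eq sum.If_cases Collect_conv_if)
  also have "\<dots> = (\<Prod>l\<in>UNIV. \<Sum>x\<in>UNIV. f l x)"
    using prod_sum_PiE[of UNIV "\<lambda>_. UNIV" f] by simp
  also have "\<dots> = (\<Sum>x\<in>UNIV. h x * \<pi> j x)"
    by (simp add: factor_sum prod.delta)
  finally show ?thesis .
qed

lemma agg_fun_upd_self [simp]: "agg i (b(i := x)) = agg i b"
  unfolding agg_def by (intro ext arg_cong[where f = card]) auto

lemma agg_in_aggset: "agg (i::'i::finite) b \<in> aggset TYPE('i)"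
proof -
  have "(\<Sum>x\<in>UNIV. agg i b x) = (\<Sum>x\<in>UNIV. \<Sum>l\<in>{l\<in>UNIV - {i}. b l = x}. (1::nat))"
    unfolding agg_def by (intro sum.cong refl) (auto intro: arg_cong[where f = card])
  also have "\<dots> = (\<Sum>l\<in>UNIV - {i}. (1::nat))"
    by (rule sum.group) auto
  finally show ?thesis
    unfolding aggset_def by simp
qed

lemma finite_aggset: "finite (aggset TYPE('i::finite) :: ('a::finite \<Rightarrow> nat) set)"
proof (rule finite_subset)
  show "aggset TYPE('i) \<subseteq> (PiE UNIV (\<lambda>_. {..CARD('i) - 1}) :: ('a \<Rightarrow> nat) set)"
  proof
    fix \<xi> :: "'a \<Rightarrow> nat"
    assume "\<xi> \<in> aggset TYPE('i)"
    then have "(\<Sum>l\<in>UNIV. \<xi> l) = CARD('i) - 1"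
      by (simp add: aggset_def)
    then have "\<xi> l \<le> CARD('i) - 1" for l
      by (metis UNIV_I finite member_le_sum zero_le)
    then show "\<xi> \<in> PiE UNIV (\<lambda>_. {..CARD('i) - 1})"
      by (simp add: PiE_UNIV_domain)
  qed
qed (rule finite_PiE; simp)

lemma Rbar_point_mass:
  fixes r :: "'i::finite \<Rightarrow> ('i \<Rightarrow> 'a::finite) \<Rightarrow> real"
  shows "Rbar r i ai (\<lambda>\<xi>. ind (agg i b = \<xi>)) = rbar r i ai (agg i b)"
  unfolding Rbar_def ind_def using agg_in_aggset[of i b] finite_aggset[where 'i = 'i and 'a = 'a]
  by (simp add: if_distrib sum.delta' cong: if_cong)

lemma Rbar_convex_update:
  "Rbar r i ai (\<lambda>\<xi>. \<mu> \<xi> + c * (\<nu> \<xi> - \<mu> \<xi>)) = Rbar r i ai \<mu> + c * (Rbar r i ai \<nu> - Rbar r i ai \<mu>)"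
  unfolding Rbar_def by (simp add: algebra_simps sum.distrib sum_subtractf sum_distrib_left)

lemma sum_fp_belief_eq_1: "(\<Sum>x\<in>UNIV. snd (fp r tb \<alpha> a0 k) l x) = 1"
proof (induction k)
  case 0
  show ?case by (simp add: ind_def)
next
  case (Suc k)
  then show ?case
    by (simp add: case_prod_beta Let_def sum.distrib sum_subtractf ind_def flip: sum_distrib_left)
qed

definition polymatrix_payoff ::
    "('i \<Rightarrow> 'i \<Rightarrow> 'a \<Rightarrow> 'a \<Rightarrow> real) \<Rightarrow> 'i::finite \<Rightarrow> 'a::finite \<Rightarrow> ('i \<Rightarrow> 'a \<Rightarrow> real) \<Rightarrow> real" where
  "polymatrix_payoff rr i ai \<pi> = (\<Sum>j\<in>UNIV - {i}. \<Sum>x\<in>UNIV. rr i j ai x * \<pi> j x)"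

lemma polymatrix_payoff_convex_update:
  "polymatrix_payoff rr i ai (\<lambda>j x. \<pi> j x + c * (\<nu> j x - \<pi> j x))
    = polymatrix_payoff rr i ai \<pi> + c * (polymatrix_payoff rr i ai \<nu> - polymatrix_payoff rr i ai \<pi>)"
  unfolding polymatrix_payoff_def
  by (simp add: algebra_simps sum.distrib sum_subtractf sum_distrib_left)

lemma polymatrix_payoff_point_mass:
  "polymatrix_payoff rr i ai (\<lambda>j x. ind (b j = x)) = (\<Sum>j\<in>UNIV - {i}. rr i j ai (b j))"
  unfolding polymatrix_payoff_def ind_def by (simp add: if_distrib cong: if_cong)

locale anonymous_polymatrix =
  fixes r :: "'i::finite \<Rightarrow> ('i \<Rightarrow> 'a::finite) \<Rightarrow> real"
    and rr :: "'i \<Rightarrow> 'i \<Rightarrow> 'a \<Rightarrow> 'a \<Rightarrow> real"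
  assumes reward_eq: "r i a = (\<Sum>j\<in>UNIV - {i}. rr i j (a i) (a j))"
    and anonymous: "anonymous r"
begin

lemma Rpure_eq_polymatrix_payoff:
  assumes "\<And>l. (\<Sum>x\<in>UNIV. \<pi> l x) = 1"
  shows "Rpure r i ai \<pi> = polymatrix_payoff rr i ai \<pi>"
proof -
  have "Rpure r i ai \<pi>
      = (\<Sum>b\<in>{b. b i = ai}. \<Sum>j\<in>UNIV - {i}. rr i j ai (b j) * (\<Prod>l\<in>UNIV - {i}. \<pi> l (b l)))"
    unfolding Rpure_def reward_eq by (intro sum.cong refl) (simp add: sum_distrib_right)
  also have "\<dots> = (\<Sum>j\<in>UNIV - {i}. \<Sum>b\<in>{b. b i = ai}. rr i j ai (b j) * (\<Prod>l\<in>UNIV - {i}. \<pi> l (b l)))"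
    by (rule sum.swap)
  also have "\<dots> = polymatrix_payoff rr i ai \<pi>"
    unfolding polymatrix_payoff_def by (intro sum.cong refl sum_prod_marginal assms) auto
  finally show ?thesis .
qed

lemma pairwise_reward_exchange:
  assumes "j \<noteq> i" "k \<noteq> i"
  shows "rr i j ai x + rr i k ai y = rr i j ai y + rr i k ai x"
proof (cases "j = k")
  case False
  define a where "a = (\<lambda>l. if l = j then x else if l = k then y else ai)"
  have "Transposition.transpose j k permutes (UNIV - {i})"
    using assms by (intro permutes_swap_id) auto
  then have "r i (a \<circ> Transposition.transpose j k) = r i a"
    using anonymous unfolding anonymous_def by blast
  moreover have "r i b = rr i j ai (b j) + rr i k ai (b k) + (\<Sum>l\<in>UNIV - {i} - {j} - {k}. rr i l ai ai)"
    if "\<forall>l. l \<noteq> j \<and> l \<noteq> k \<longrightarrow> b l = ai" for b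
    using assms False that
    by (simp add: reward_eq sum.remove[of _ j] sum.remove[of _ k] Diff_insert2[symmetric])
  ultimately show ?thesis
    using assms False by (simp add: a_def Transposition.transpose_def)
qed simp

lemma reward_affine_in_agg:
  obtains C g where "\<And>c. c i = ai \<Longrightarrow> r i c = C + (\<Sum>x\<in>UNIV. real (agg i c x) * g x)"
proof (cases "\<exists>k. k \<noteq> i")
  case False
  then have "UNIV - {i} = {}"
    by blast
  then have "r i c = 0" for c
    unfolding reward_eq by (metis sum.empty)
  then show ?thesis
    using that[of 0 "\<lambda>_. 0"] by simp
next
  case True
  then obtain k where "k \<noteq> i" by blast
  define g where "g x = rr i k ai x - rr i k ai ai" for x
  have "r i c = (\<Sum>l\<in>UNIV - {i}. rr i l ai ai) + (\<Sum>x\<in>UNIV. real (agg i c x) * g x)"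
    if "c i = ai" for c
  proof -
    have "rr i l ai (c l) = rr i l ai ai + g (c l)" if "l \<noteq> i" for l
      using pairwise_reward_exchange[OF that \<open>k \<noteq> i\<close>, of ai "c l" ai] by (simp add: g_def)
    then have "r i c = (\<Sum>l\<in>UNIV - {i}. rr i l ai ai) + (\<Sum>l\<in>UNIV - {i}. g (c l))"
      using \<open>c i = ai\<close> by (simp add: reward_eq sum.distrib)
    also have "(\<Sum>l\<in>UNIV - {i}. g (c l)) = (\<Sum>x\<in>UNIV. real (agg i c x) * g x)"
      by (subst sum_by_value_count) (simp_all add: agg_def conj_commute)
    finally show ?thesis .
  qed
  then show ?thesis
    using that by blast
qed

lemma rbar_agg: "rbar r i ai (agg i b) = (\<Sum>j\<in>UNIV - {i}. rr i j ai (b j))"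
proof -
  define c where "c = (SOME c. c i = ai \<and> agg i c = agg i b)"
  have "\<exists>c. c i = ai \<and> agg i c = agg i b"
    by (intro exI[of _ "b(i := ai)"]) simp
  then have c: "c i = ai" "agg i c = agg i b"
    unfolding c_def by (metis (mono_tags, lifting) someI_ex)+
  obtain C g where "\<And>c. c i = ai \<Longrightarrow> r i c = C + (\<Sum>x\<in>UNIV. real (agg i c x) * g x)"
    using reward_affine_in_agg by blast
  then have "r i c = r i (b(i := ai))"
    using c by simp
  also have "\<dots> = (\<Sum>j\<in>UNIV - {i}. rr i j ai (b j))"
    unfolding reward_eq by (intro sum.cong) auto
  finally show ?thesis
    unfolding rbar_def c_def .
qed

lemma Rbar_point_mass_eq_polymatrix_payoff:
  "Rbar r i ai (\<lambda>\<xi>. ind (agg i b = \<xi>)) = polymatrix_payoff rr i ai (\<lambda>j x. ind (b j = x))"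
  by (simp add: Rbar_point_mass rbar_agg polymatrix_payoff_point_mass)

lemma aggfp_eq_fp:
  "fst (aggfp r tb \<alpha> a0 k) = fst (fp r tb \<alpha> a0 k)
   \<and> snd (snd (aggfp r tb \<alpha> a0 k)) = snd (fp r tb \<alpha> a0 k)
   \<and> (\<forall>i ai. Rbar r i ai (fst (snd (aggfp r tb \<alpha> a0 k)) i) = polymatrix_payoff rr i ai (snd (fp r tb \<alpha> a0 k)))"
proof (induction k)
  case 0
  show ?case
    by (simp add: Rbar_point_mass_eq_polymatrix_payoff)
next
  case (Suc k)
  obtain a \<mu> \<gamma> where agg_state: "aggfp r tb \<alpha> a0 k = (a, \<mu>, \<gamma>)"
    by (metis prod_cases3)
  obtain a' \<pi> where fp_state: "fp r tb \<alpha> a0 k = (a', \<pi>)"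
    by (metis prod.exhaust)
  have "\<gamma> = \<pi>" and Rbar_\<mu>: "\<And>i ai. Rbar r i ai (\<mu> i) = polymatrix_payoff rr i ai \<pi>"
    using Suc.IH agg_state fp_state by auto
  have Rpure_\<pi>: "Rpure r i ai \<pi> = polymatrix_payoff rr i ai \<pi>" for i ai
    using Rpure_eq_polymatrix_payoff sum_fp_belief_eq_1 fp_state by (metis snd_conv)
  show ?case
    using \<open>\<gamma> = \<pi>\<close>
    by (simp add: agg_state fp_state Rpure_\<pi> Let_def Rbar_convex_update
        polymatrix_payoff_convex_update Rbar_\<mu> Rbar_point_mass_eq_polymatrix_payoff)
qed

end

theorem lemma4:
  fixes r :: "'i::finite \<Rightarrow> ('i \<Rightarrow> 'a::finite) \<Rightarrow> real"
    and tb :: "'i \<Rightarrow> 'a set \<Rightarrow> 'a"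
    and \<alpha> :: "nat \<Rightarrow> real"
    and a0 :: "'i \<Rightarrow> 'a"
  assumes "polymatrix r" and "anonymous r"
    and "tie_break tb"
    and "\<And>k. k \<ge> 1 \<Longrightarrow> 0 < \<alpha> k \<and> \<alpha> k \<le> 1"
    and "\<not> summable (\<lambda>k. \<alpha> (Suc k))"
    and "summable (\<lambda>k. (\<alpha> (Suc k))\<^sup>2)"
  shows "(\<lambda>k. INF p\<in>NE r. pdist (aggfp_gamma r tb \<alpha> a0 k) p) \<longlonglongrightarrow> 0
         \<longleftrightarrow> (\<lambda>k. INF p\<in>NE r. pdist (fp_pi r tb \<alpha> a0 k) p) \<longlonglongrightarrow> 0"
proof -
  obtain rr where "\<And>i a. r i a = (\<Sum>j\<in>UNIV - {i}. rr i j (a i) (a j))"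
    using \<open>polymatrix r\<close> unfolding polymatrix_def by blast
  then interpret anonymous_polymatrix r rr
    using \<open>anonymous r\<close> by unfold_locales
  have "aggfp_gamma r tb \<alpha> a0 = fp_pi r tb \<alpha> a0"
    using aggfp_eq_fp unfolding aggfp_gamma_def fp_pi_def by blast
  then show ?thesis
    by simp
qed

end
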